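(* For each integer $N\ge 1$ let $\Gamma_N$ be the $(N+1,2)$-PPCFG with nonterminals $\{\mathtt{START},X_1,\dots,X_N\}$, terminals $\{0,1\}$, start symbol $\mathtt{START}$, and the following $N+1$ production groups: the group $(\mathtt{START}\to X_1X_2\cdots X_N,\ \mathtt{START}\to X_1X_2\cdots X_N)$, and for each $k\in\{1,\dots,N\}$ the group $(X_k\to 0,\ X_k\to 1)$. Consider any (deterministic) learning algorithm that, for every parameter setting $p^*\in\{1,2\}^{N+1}$ taken as the unknown target, interacts with a membership oracle for $L(\Gamma_{N,p^*})$ and an equivalence oracle for $L(\Gamma_{N,p^*})$ (whose hypotheses are of the form $\Gamma_{N,p}$, and which answers ``true'' if $L(\Gamma_{N,p})=L(\Gamma_{N,p^*})$ and otherwise returns a string in the symmetric difference $L(\Gamma_{N,p})\,\Delta\,L(\Gamma_{N,p^*})$), and which eventually outputs a parameter setting $p$ with $L(\Gamma_{N,p})=L(\Gamma_{N,p^*})$. Then there is a target $p^*$ and a choice of oracle answers consistent with it for which the algorithm makes at least $2^N-1$ queries. Consequently, there is no algorithm that learns the PPCFGs from equivalence and membership queries using a number of queries bounded by a polynomial in $n$ and $k$.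
   Context: An $(n,k)$-principled parametric context-free grammar ($(n,k)$-PPCFG) is a 4-tuple $\Gamma=(V,\Sigma,\Pi,S)$ where $V$ is a finite set of nonterminals, $\Sigma$ a finite set of terminals, $S\in V$ the start symbol, and $\Pi$ a list of $n$ production groups, the $i$-th group being a $k$-tuple of context-free productions $\Pi_{i,1},\dots,\Pi_{i,k}$, each of the form $A\to\alpha$ with $A\in V$, $\alpha\in(V\cup\Sigma)^*$. A parameter setting is $p=(p_1,\dots,p_n)$ with each $p_i\in\{1,\dots,k\}$; $\Gamma_p$ denotes the ordinary context-free grammar $(V,\Sigma,R,S)$ with $R=\{\Pi_{i,p_i}: 1\le i\le n\}$, and $L(\Gamma_p)$ its language. A membership oracle for $L$ takes a string $w$ and answers whether $w\in L$. The class of PPCFGs is learnable from equivalence and membership queries if there is an algorithm which, for every PPCFG $\Gamma$ and every target language of the form $L(\Gamma_{p^*})$, after finitely many queries outputs some $p$ with $L(\Gamma_p)=L(\Gamma_{p^*})$; it does so efficiently if the number of queries is bounded by a polynomial in $n$ and $k$. *)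

theory Defs
  imports Main
begin

datatype ('n, 't) sym = NT 'n | Tm 't

type_synonym ('n, 't) prod = "'n \<times> ('n, 't) sym list"

definition derive1 :: "('n, 't) prod set \<Rightarrow> ('n, 't) sym list \<Rightarrow> ('n, 't) sym list \<Rightarrow> bool" where
  "derive1 R xs ys \<longleftrightarrow>
     (\<exists>u A \<alpha> v. (A, \<alpha>) \<in> R \<and> xs = u @ [NT A] @ v \<and> ys = u @ \<alpha> @ v)"

definition cfg_lang :: "('n, 't) prod set \<Rightarrow> 'n \<Rightarrow> 't list set" where
  "cfg_lang R S = {w. (derive1 R)\<^sup>*\<^sup>* [NT S] (map Tm w)}"

text \<open>A PPCFG: start symbol and a list of n production groups, each a list (k-tuple)
  of productions. Nonterminals/terminals are the types 'n and 't.\<close>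
type_synonym ('n, 't) ppcfg = "'n \<times> ('n, 't) prod list list"

definition ppcfg_start :: "('n, 't) ppcfg \<Rightarrow> 'n" where
  "ppcfg_start G = fst G"

definition ppcfg_groups :: "('n, 't) ppcfg \<Rightarrow> ('n, 't) prod list list" where
  "ppcfg_groups G = snd G"

text \<open>Parameter settings are lists p of length n with entries in {1..k} (1-based, as in the
  paper); group i (0-based list index) selects its (p!i)-th production.\<close>
definition valid_setting :: "('n, 't) ppcfg \<Rightarrow> nat list \<Rightarrow> bool" where
  "valid_setting G p \<longleftrightarrow> length p = length (ppcfg_groups G) \<and>
     (\<forall>i < length p. 1 \<le> p ! i \<and> p ! i \<le> length (ppcfg_groups G ! i))"

definition ppcfg_rules :: "('n, 't) ppcfg \<Rightarrow> nat list \<Rightarrow> ('n, 't) prod set" where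
  "ppcfg_rules G p = {ppcfg_groups G ! i ! (p ! i - 1) | i. i < length (ppcfg_groups G)}"

definition ppcfg_lang :: "('n, 't) ppcfg \<Rightarrow> nat list \<Rightarrow> 't list set" where
  "ppcfg_lang G p = cfg_lang (ppcfg_rules G p) (ppcfg_start G)"

datatype nt = START | X nat
datatype bit = B0 | B1

definition GammaN :: "nat \<Rightarrow> (nt, bit) ppcfg" where
  "GammaN N = (START,
     [(START, map (\<lambda>k. NT (X k)) [1..<N+1]), (START, map (\<lambda>k. NT (X k)) [1..<N+1])]
     # map (\<lambda>k. [(X k, [Tm B0]), (X k, [Tm B1])]) [1..<N+1])"

datatype ('t, 'p) query = MemQ "'t list" | EqQ 'p
datatype 't answer = MemAns bool | EqTrue | EqCex "'t list"
datatype ('t, 'p) action = Ask "('t, 'p) query" | Output 'p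

type_synonym ('t, 'p) history = "(('t, 'p) query \<times> 't answer) list"

fun answer_ok :: "('p \<Rightarrow> 't list set) \<Rightarrow> 'p \<Rightarrow> ('t, 'p) query \<Rightarrow> 't answer \<Rightarrow> bool" where
  "answer_ok Lang tgt (MemQ w) a \<longleftrightarrow> a = MemAns (w \<in> Lang tgt)"
| "answer_ok Lang tgt (EqQ p) a \<longleftrightarrow>
     (if Lang p = Lang tgt then a = EqTrue
      else (\<exists>w. a = EqCex w \<and> w \<in> (Lang p - Lang tgt) \<union> (Lang tgt - Lang p)))"

text \<open>A (deterministic) learner maps the history so far to its next action.
  A run is a history in which every query is the one the learner asks and
  every answer is consistent with the target.\<close>
definition is_run :: "(('t, 'p) history \<Rightarrow> ('t, 'p) action) \<Rightarrow> ('p \<Rightarrow> 't list set) \<Rightarrow> 'p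
    \<Rightarrow> ('t, 'p) history \<Rightarrow> bool" where
  "is_run learner Lang tgt h \<longleftrightarrow>
     (\<forall>i < length h. learner (take i h) = Ask (fst (h ! i)) \<and>
                    answer_ok Lang tgt (fst (h ! i)) (snd (h ! i)))"

end

theory Submission
  imports Defs
begin

text \<open>
  Under every parameter setting p the grammar Gamma_N generates exactly one
  word, namely the N bits selected by p, and all 2^N bit strings of length N arise in this
  way. So learning Gamma_N means identifying an unknown singleton language {w}. An
  adversary answers every membership query "no" and every equivalence query for the
  hypothesis {v} with the counterexample v. Each such answer rules out at most one
  candidate word and stays consistent with every target whose word has not been touched.
  While two candidates survive the learner cannot output (the same history would be a run
  for two different targets), and once it has asked 2^N - 1 queries some untouched target
  is still consistent with the history, which termination extends to a complete run.
\<close>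

section \<open>Runs of a learner\<close>

lemma is_run_snoc:
  assumes "is_run l Lang t h" "l h = Ask (fst x)" "answer_ok Lang t (fst x) (snd x)"
  shows "is_run l Lang t (h @ [x])"
  using assms unfolding is_run_def by (auto simp: nth_append less_Suc_eq)

lemma is_run_take: "is_run l Lang t h \<Longrightarrow> is_run l Lang t (take m h)"
  unfolding is_run_def by (auto simp: min_def)

lemma answer_exists: "\<exists>a. answer_ok Lang t q a"
  by (cases q) (auto simp: ex_in_conv[symmetric])

primrec continue_run :: "(('t, 'p) history \<Rightarrow> ('t, 'p) action) \<Rightarrow> ('p \<Rightarrow> 't list set) \<Rightarrow> 'p
    \<Rightarrow> ('t, 'p) history \<Rightarrow> nat \<Rightarrow> ('t, 'p) history" where
  "continue_run l Lang t h 0 = h"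
| "continue_run l Lang t h (Suc m) = (case l (continue_run l Lang t h m) of
      Ask q \<Rightarrow> continue_run l Lang t h m @ [(q, SOME a. answer_ok Lang t q a)]
    | Output p \<Rightarrow> continue_run l Lang t h m)"

lemma continue_run_is_run:
  "is_run l Lang t h \<Longrightarrow> is_run l Lang t (continue_run l Lang t h m)"
proof (induction m)
  case (Suc m)
  have "answer_ok Lang t q (SOME a. answer_ok Lang t q a)" for q
    using answer_exists by (rule someI_ex)
  with Suc show ?case by (auto intro: is_run_snoc split: action.split)
qed simp

lemma continue_run_prefix: "\<exists>zs. continue_run l Lang t h (m + d) = continue_run l Lang t h m @ zs"
  by (induction d) (auto split: action.split)

lemma continue_run_infinite:
  assumes run: "is_run l Lang t h"
    and asks: "\<And>m. \<exists>q. l (continue_run l Lang t h m) = Ask q"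
  shows "\<exists>f. \<forall>m. is_run l Lang t (map f [0..<m])"
proof -
  let ?c = "continue_run l Lang t h"
  have len: "length (?c m) = length h + m" for m
  proof (induction m)
    case (Suc m)
    obtain q where "l (?c m) = Ask q"
      using asks by blast
    with Suc show ?case by simp
  qed simp
  have nth_stable: "?c m ! j = ?c (Suc j) ! j" if "j < m" for j m
  proof -
    obtain zs where "?c (Suc j + (m - Suc j)) = ?c (Suc j) @ zs"
      using continue_run_prefix[of l Lang t h "Suc j" "m - Suc j"] by blast
    with that len[of "Suc j"] show ?thesis by (simp add: nth_append)
  qed
  define f where "f j = ?c (Suc j) ! j" for j
  have "map f [0..<m] = take m (?c m)" for m
    by (rule nth_equalityI) (simp_all add: len f_def nth_stable)
  then show ?thesis
    using is_run_take continue_run_is_run[OF run] by metis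
qed

lemma run_reaches_output:
  assumes run: "is_run l Lang t h"
    and terminates: "\<And>f. \<not> (\<forall>m. is_run l Lang t (map f [0..<m]))"
  shows "\<exists>h' p. is_run l Lang t h' \<and> l h' = Output p \<and> length h' \<ge> length h"
proof -
  let ?c = "continue_run l Lang t h"
  obtain m p where out: "l (?c m) = Output p"
    using continue_run_infinite[OF run] terminates by (metis action.exhaust)
  obtain zs where "?c (0 + m) = ?c 0 @ zs"
    using continue_run_prefix[of l Lang t h 0 m] by blast
  then have "length (?c m) \<ge> length h" by simp
  with out continue_run_is_run[OF run] show ?thesis by blast
qed

section \<open>The adversary for classes of singleton languages\<close>

text \<open>Throughout, word p is the unique word of the language of hypothesis p. The adversary
  rejects every membership query and refutes the hypothesis p with its own word.\<close>
fun adversary_answer :: "('p \<Rightarrow> 't list) \<Rightarrow> ('t, 'p) query \<Rightarrow> 't answer" where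
  "adversary_answer word (MemQ w) = MemAns False"
| "adversary_answer word (EqQ p) = EqCex (word p)"

text \<open>The single candidate word that a query-answer pair rules out.\<close>
fun touched_word :: "('p \<Rightarrow> 't list) \<Rightarrow> ('t, 'p) query \<times> 't answer \<Rightarrow> 't list" where
  "touched_word word (MemQ w, a) = w"
| "touched_word word (EqQ p, a) = word p"

primrec adversary_history :: "(('t, 'p) history \<Rightarrow> ('t, 'p) action) \<Rightarrow> ('p \<Rightarrow> 't list)
    \<Rightarrow> nat \<Rightarrow> ('t, 'p) history" where
  "adversary_history l word 0 = []"
| "adversary_history l word (Suc m) = (case l (adversary_history l word m) of
      Ask q \<Rightarrow> adversary_history l word m @ [(q, adversary_answer word q)]
    | Output p \<Rightarrow> adversary_history l word m)"

abbreviation asks_up_to :: "(('t, 'p) history \<Rightarrow> ('t, 'p) action) \<Rightarrow> ('p \<Rightarrow> 't list)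
    \<Rightarrow> nat \<Rightarrow> bool" where
  "asks_up_to l word m \<equiv> \<forall>j<m. \<exists>q. l (adversary_history l word j) = Ask q"

lemma adversary_history_length:
  "asks_up_to l word m \<Longrightarrow> length (adversary_history l word m) = m"
  by (induction m) (auto split: action.split)

locale singleton_class_learner =
  fixes V :: "'p \<Rightarrow> bool" and Lang :: "'p \<Rightarrow> 't list set" and word :: "'p \<Rightarrow> 't list"
    and l :: "('t, 'p) history \<Rightarrow> ('t, 'p) action"
  assumes singleton: "V p \<Longrightarrow> Lang p = {word p}"
    and eq_wf: "V t \<Longrightarrow> is_run l Lang t h \<Longrightarrow> l h = Ask (EqQ p) \<Longrightarrow> V p"
    and correct: "V t \<Longrightarrow> is_run l Lang t h \<Longrightarrow> l h = Output p \<Longrightarrow> Lang p = Lang t"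
begin

lemma adversary_history_is_run:
  assumes "V t"
  shows "asks_up_to l word m \<Longrightarrow> word t \<notin> touched_word word ` set (adversary_history l word m)
     \<Longrightarrow> is_run l Lang t (adversary_history l word m)"
proof (induction m)
  case (Suc m)
  obtain q where q: "l (adversary_history l word m) = Ask q"
    using Suc.prems(1) by blast
  then have step: "adversary_history l word (Suc m) = adversary_history l word m @ [(q, adversary_answer word q)]"
    by simp
  have run: "is_run l Lang t (adversary_history l word m)"
    using Suc step by auto
  have untouched: "word t \<noteq> touched_word word (q, adversary_answer word q)"
    using Suc.prems(2) step by auto
  have "answer_ok Lang t q (adversary_answer word q)"
  proof (cases q)
    case (MemQ w)
    with untouched singleton[OF \<open>V t\<close>] show ?thesis by auto
  next
    case (EqQ p)
    with eq_wf[OF \<open>V t\<close> run] q have "V p" by simp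
    with EqQ untouched singleton singleton[OF \<open>V t\<close>] show ?thesis by auto
  qed
  with step run q show ?case by (simp add: is_run_snoc)
qed (simp add: is_run_def)

lemma untouched_words_card:
  assumes "finite W" "asks_up_to l word m"
  shows "card W \<le> card (W - touched_word word ` set (adversary_history l word m)) + m"
proof -
  let ?E = "touched_word word ` set (adversary_history l word m)"
  have "card ?E \<le> m"
    using card_image_le[of "set (adversary_history l word m)" "touched_word word"]
      card_length[of "adversary_history l word m"] adversary_history_length[OF assms(2)] by simp
  moreover have "card W \<le> card (W - ?E) + card ?E"
    using assms(1) card_Un_le[of "W - ?E" ?E] card_mono[of "(W - ?E) \<union> ?E" W] by auto
  ultimately show ?thesis by simp
qed

text \<open>A correct learner cannot output against the adversary while two candidate words
  survive: the history would be a run for two targets with different languages.\<close>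
lemma adversary_no_early_output:
  assumes realized: "W \<subseteq> word ` Collect V"
    and "finite W" "asks_up_to l word j"
    and out: "l (adversary_history l word j) = Output p"
  shows "card W \<le> Suc j"
proof -
  let ?U = "W - touched_word word ` set (adversary_history l word j)"
  have language: "Lang p = {w}" if w: "w \<in> ?U" for w
  proof -
    obtain t where t: "V t" "word t = w"
      using realized w by blast
    then have "is_run l Lang t (adversary_history l word j)"
      using adversary_history_is_run w \<open>asks_up_to l word j\<close> by blast
    with correct out t singleton show ?thesis by auto
  qed
  have "a = b" if "a \<in> ?U" "b \<in> ?U" for a b
    using language[OF that(1)] language[OF that(2)] by simp
  then have "card ?U \<le> 1"
    using \<open>finite W\<close> by (simp add: card_le_Suc0_iff_eq)
  with untouched_words_card[OF \<open>finite W\<close> \<open>asks_up_to l word j\<close>] show ?thesis by simp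
qed

theorem singleton_class_lower_bound:
  assumes realized: "W \<subseteq> word ` Collect V"
    and W: "finite W" "W \<noteq> {}"
    and terminates: "\<And>t f. V t \<Longrightarrow> \<not> (\<forall>m. is_run l Lang t (map f [0..<m]))"
  shows "\<exists>t h p. V t \<and> is_run l Lang t h \<and> l h = Output p \<and> length h \<ge> card W - 1"
proof -
  let ?K = "card W - 1"
  have asks: "asks_up_to l word ?K"
  proof (rule ccontr)
    let ?stops = "\<lambda>j. j < ?K \<and> (\<nexists>q. l (adversary_history l word j) = Ask q)"
    assume "\<not> asks_up_to l word ?K"
    then have "\<exists>j. ?stops j" by blast
    then obtain j where j: "?stops j" and first: "\<forall>i<j. \<not> ?stops i"
      unfolding exists_least_iff[of ?stops] by blast
    then have "asks_up_to l word j" by force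
    moreover obtain p where "l (adversary_history l word j) = Output p"
      using j by (cases "l (adversary_history l word j)") auto
    ultimately have "card W \<le> Suc j"
      using adversary_no_early_output[OF realized \<open>finite W\<close>] by blast
    with j show False by linarith
  qed
  let ?U = "W - touched_word word ` set (adversary_history l word ?K)"
  have "card W \<ge> 1"
    using W by (simp add: Suc_le_eq card_gt_0_iff)
  then have "card ?U \<noteq> 0"
    using untouched_words_card[OF \<open>finite W\<close> asks] by linarith
  then obtain w where w: "w \<in> ?U"
    by (metis card.empty ex_in_conv)
  then obtain t where t: "V t" "word t = w"
    using realized by blast
  then have "is_run l Lang t (adversary_history l word ?K)"
    using adversary_history_is_run asks w by blast
  with run_reaches_output terminates t(1) adversary_history_length[OF asks] show ?thesis
    by metis
qed

end

section \<open>The languages of Gamma_N\<close>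

abbreviation X_sequence :: "nat \<Rightarrow> (nt, bit) sym list" where
  "X_sequence N \<equiv> map (\<lambda>k. NT (X k)) [1..<N+1]"

definition chosen_bit :: "nat list \<Rightarrow> nat \<Rightarrow> bit" where
  "chosen_bit p k = (if p ! k = 1 then B0 else B1)"

definition selected_word :: "nat \<Rightarrow> nat list \<Rightarrow> bit list" where
  "selected_word N p = map (chosen_bit p) [1..<N+1]"

abbreviation selected_rules :: "nat \<Rightarrow> nat list \<Rightarrow> (nt, bit) prod set" where
  "selected_rules N p \<equiv> insert (START, X_sequence N) ((\<lambda>k. (X k, [Tm (chosen_bit p k)])) ` {1..N})"

lemma GammaN_groups_length: "length (ppcfg_groups (GammaN N)) = Suc N"
  by (simp add: ppcfg_groups_def GammaN_def)

lemma GammaN_start_group: "ppcfg_groups (GammaN N) ! 0 = [(START, X_sequence N), (START, X_sequence N)]"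
  by (simp add: ppcfg_groups_def GammaN_def del: upt_Suc)

lemma GammaN_bit_group:
  "1 \<le> k \<Longrightarrow> k \<le> N \<Longrightarrow> ppcfg_groups (GammaN N) ! k = [(X k, [Tm B0]), (X k, [Tm B1])]"
  by (cases k) (simp_all add: ppcfg_groups_def GammaN_def del: upt_Suc)

lemma valid_setting_GammaN:
  "valid_setting (GammaN N) p \<longleftrightarrow> length p = Suc N \<and> (\<forall>i\<le>N. p ! i = 1 \<or> p ! i = 2)"
proof -
  have two: "length (ppcfg_groups (GammaN N) ! i) = 2" if "i \<le> N" for i
    using that GammaN_start_group[of N] GammaN_bit_group[of i N] by (cases "i = 0") auto
  have "(1 \<le> c \<and> c \<le> 2) \<longleftrightarrow> (c = 1 \<or> c = (2::nat))" for c
    by auto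
  with two show ?thesis
    unfolding valid_setting_def GammaN_groups_length by (auto simp: less_Suc_eq_le)
qed

lemma ppcfg_rules_GammaN:
  assumes "valid_setting (GammaN N) p"
  shows "ppcfg_rules (GammaN N) p = selected_rules N p"
proof -
  define rule where "rule i = ppcfg_groups (GammaN N) ! i ! (p ! i - 1)" for i
  have choice: "p ! i = 1 \<or> p ! i = 2" if "i \<le> N" for i
    using assms that by (simp add: valid_setting_GammaN)
  have "ppcfg_rules (GammaN N) p = rule ` {0..N}"
    unfolding ppcfg_rules_def GammaN_groups_length rule_def by auto
  also have "\<dots> = insert (rule 0) (rule ` {1..N})"
    by (metis atLeastAtMost_insertL image_insert le0 One_nat_def)
  also have "rule 0 = (START, X_sequence N)"
    using choice[of 0] by (auto simp: rule_def GammaN_start_group simp del: upt_Suc)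
  also have "rule ` {1..N} = (\<lambda>k. (X k, [Tm (chosen_bit p k)])) ` {1..N}"
  proof (rule image_cong[OF refl])
    fix k assume "k \<in> {1..N}"
    with choice[of k] show "rule k = (X k, [Tm (chosen_bit p k)])"
      by (auto simp: rule_def GammaN_bit_group chosen_bit_def)
  qed
  finally show ?thesis .
qed

lemma derive1_prefix: "derive1 R xs ys \<Longrightarrow> derive1 R (a @ xs) (a @ ys)"
  unfolding derive1_def by (metis append.assoc)

lemma derives_prefix: "(derive1 R)\<^sup>*\<^sup>* xs ys \<Longrightarrow> (derive1 R)\<^sup>*\<^sup>* (a @ xs) (a @ ys)"
  by (induction rule: rtranclp_induct) (auto intro: rtranclp.rtrancl_into_rtrancl derive1_prefix)

lemma derive1_head: "(A, \<alpha>) \<in> R \<Longrightarrow> derive1 R (NT A # xs) (\<alpha> @ xs)"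
  unfolding derive1_def by (metis append.simps(1) append_Cons)

lemma derives_terminals:
  assumes "\<And>k. k \<in> set ks \<Longrightarrow> (A k, [Tm (b k)]) \<in> R"
  shows "(derive1 R)\<^sup>*\<^sup>* (map (\<lambda>k. NT (A k)) ks) (map (\<lambda>k. Tm (b k)) ks)"
  using assms
proof (induction ks)
  case (Cons k ks)
  have "derive1 R (NT (A k) # map (\<lambda>k. NT (A k)) ks) ([Tm (b k)] @ map (\<lambda>k. NT (A k)) ks)"
    using Cons.prems by (intro derive1_head) auto
  moreover have "(derive1 R)\<^sup>*\<^sup>* ([Tm (b k)] @ map (\<lambda>k. NT (A k)) ks) ([Tm (b k)] @ map (\<lambda>k. Tm (b k)) ks)"
    using Cons by (intro derives_prefix) auto
  ultimately show ?case by (simp add: converse_rtranclp_into_rtranclp)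
qed simp

text \<open>The sentential forms of Gamma_N under p: the start symbol, or a word of length N
  whose i-th symbol is still X_(i+1) or already its chosen bit.\<close>
definition sentential :: "nat \<Rightarrow> nat list \<Rightarrow> (nt, bit) sym list \<Rightarrow> bool" where
  "sentential N p xs \<longleftrightarrow> xs = [NT START] \<or>
     (length xs = N \<and> (\<forall>i<N. xs ! i = NT (X (Suc i)) \<or> xs ! i = Tm (chosen_bit p (Suc i))))"

lemma sentential_step:
  assumes "derive1 (selected_rules N p) xs ys"
    and "sentential N p xs"
  shows "sentential N p ys"
proof -
  obtain u A \<alpha> v where rule: "(A, \<alpha>) \<in> selected_rules N p"
    and xs: "xs = u @ [NT A] @ v" and ys: "ys = u @ \<alpha> @ v"
    using assms(1) unfolding derive1_def by blast
  show ?thesis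
  proof (cases "xs = [NT START]")
    case True
    then have "u = []" "v = []" "A = START"
      using xs by (cases u; auto)+
    then have "ys = X_sequence N"
      using rule ys by auto
    then show ?thesis unfolding sentential_def by (simp del: upt_Suc)
  next
    case False
    then have len: "length xs = N"
      and syms: "\<forall>i<N. xs ! i = NT (X (Suc i)) \<or> xs ! i = Tm (chosen_bit p (Suc i))"
      using assms(2) unfolding sentential_def by auto
    have "length u < N" "xs ! length u = NT A"
      using len xs by simp_all
    then have "A = X (Suc (length u))"
      using syms by force
    then have ys': "ys = xs[length u := Tm (chosen_bit p (Suc (length u)))]"
      using rule xs ys by auto
    have "ys ! i = NT (X (Suc i)) \<or> ys ! i = Tm (chosen_bit p (Suc i))" if "i < N" for i
      using that syms len by (cases "i = length u") (auto simp: ys')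
    with len ys' show ?thesis
      unfolding sentential_def by auto
  qed
qed

lemma ppcfg_lang_GammaN:
  assumes "valid_setting (GammaN N) p"
  shows "ppcfg_lang (GammaN N) p = {selected_word N p}"
proof -
  let ?R = "selected_rules N p"
  have "ppcfg_start (GammaN N) = START"
    by (simp add: ppcfg_start_def GammaN_def)
  then have lang: "ppcfg_lang (GammaN N) p = {w. (derive1 ?R)\<^sup>*\<^sup>* [NT START] (map Tm w)}"
    unfolding ppcfg_lang_def cfg_lang_def ppcfg_rules_GammaN[OF assms] by simp
  have reachable: "sentential N p xs" if "(derive1 ?R)\<^sup>*\<^sup>* [NT START] xs" for xs
    using that by (induction rule: rtranclp_induct) (simp add: sentential_def, blast intro: sentential_step)
  have sound: "w = selected_word N p" if "(derive1 ?R)\<^sup>*\<^sup>* [NT START] (map Tm w)" for w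
  proof -
    from reachable[OF that] show ?thesis
      unfolding sentential_def selected_word_def by (intro nth_equalityI) (auto simp del: upt_Suc)
  qed
  have "derive1 ?R [NT START] (X_sequence N)"
    using derive1_head[of START "X_sequence N" ?R "[]"] by simp
  moreover have "(derive1 ?R)\<^sup>*\<^sup>* (X_sequence N) (map (\<lambda>k. Tm (chosen_bit p k)) [1..<N+1])"
    by (rule derives_terminals) auto
  ultimately have "(derive1 ?R)\<^sup>*\<^sup>* [NT START] (map (\<lambda>k. Tm (chosen_bit p k)) [1..<N+1])"
    by (rule converse_rtranclp_into_rtranclp)
  then have "(derive1 ?R)\<^sup>*\<^sup>* [NT START] (map Tm (selected_word N p))"
    by (simp add: selected_word_def comp_def del: upt_Suc)
  with sound show ?thesis
    unfolding lang by blast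
qed

lemma selected_word_surj:
  assumes "length w = N"
  shows "\<exists>p. valid_setting (GammaN N) p \<and> selected_word N p = w"
proof -
  define p where "p = (1::nat) # map (\<lambda>b. if b = B0 then 1 else 2) w"
  have "valid_setting (GammaN N) p"
    using assms by (auto simp: valid_setting_GammaN p_def nth_Cons split: nat.split)
  moreover have "b \<noteq> B0 \<longleftrightarrow> b = B1" for b
    by (cases b) auto
  then have "selected_word N p = w"
    using assms by (intro nth_equalityI)
      (auto simp: selected_word_def chosen_bit_def p_def nth_Cons' split: bit.split simp del: upt_Suc)
  ultimately show ?thesis by blast
qed

lemma card_bit_words: "card {w :: bit list. length w = N} = 2 ^ N"
proof -
  have "{w :: bit list. length w = N} = {w. set w \<subseteq> {B0, B1} \<and> length w = N}"
    using bit.exhaust by blast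
  then show ?thesis
    by (simp add: card_lists_length_eq numeral_2_eq_2)
qed

lemma bit_words_selected:
  "{w. length w = N} \<subseteq> selected_word N ` Collect (valid_setting (GammaN N))"
proof
  fix w :: "bit list" assume "w \<in> {w. length w = N}"
  then obtain p where "valid_setting (GammaN N) p" "selected_word N p = w"
    using selected_word_surj by auto
  then show "w \<in> selected_word N ` Collect (valid_setting (GammaN N))" by blast
qed

lemma GammaN_singleton_class_learner:
  assumes eq_queries_wf: "\<forall>tgt h p. valid_setting (GammaN N) tgt
              \<and> is_run learner (ppcfg_lang (GammaN N)) tgt h
              \<and> learner h = Ask (EqQ p) \<longrightarrow> valid_setting (GammaN N) p"
    and correct: "\<forall>tgt h p. valid_setting (GammaN N) tgt
              \<and> is_run learner (ppcfg_lang (GammaN N)) tgt h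
              \<and> learner h = Output p \<longrightarrow>
                valid_setting (GammaN N) p
                \<and> ppcfg_lang (GammaN N) p = ppcfg_lang (GammaN N) tgt"
  shows "singleton_class_learner (valid_setting (GammaN N)) (ppcfg_lang (GammaN N))
    (selected_word N) learner"
proof
  fix p assume "valid_setting (GammaN N) p"
  then show "ppcfg_lang (GammaN N) p = {selected_word N p}"
    by (rule ppcfg_lang_GammaN)
next
  fix t h p assume "valid_setting (GammaN N) t" "is_run learner (ppcfg_lang (GammaN N)) t h"
    "learner h = Ask (EqQ p)"
  then show "valid_setting (GammaN N) p"
    using eq_queries_wf[rule_format, of t h p] by simp
next
  fix t h p assume "valid_setting (GammaN N) t" "is_run learner (ppcfg_lang (GammaN N)) t h"
    "learner h = Output p"
  then show "ppcfg_lang (GammaN N) p = ppcfg_lang (GammaN N) t"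
    using correct[rule_format, of t h p] by simp
qed

theorem mainTheorem1:
  fixes N :: nat
    and learner :: "(bit, nat list) history \<Rightarrow> (bit, nat list) action"
  assumes "N \<ge> 1"
    and eq_queries_wf: "\<forall>tgt h p. valid_setting (GammaN N) tgt
              \<and> is_run learner (ppcfg_lang (GammaN N)) tgt h
              \<and> learner h = Ask (EqQ p) \<longrightarrow> valid_setting (GammaN N) p"
    and terminates: "\<forall>tgt (f :: nat \<Rightarrow> (bit, nat list) query \<times> bit answer).
              valid_setting (GammaN N) tgt \<longrightarrow>
              \<not> (\<forall>m. is_run learner (ppcfg_lang (GammaN N)) tgt (map f [0..<m]))"
    and correct: "\<forall>tgt h p. valid_setting (GammaN N) tgt
              \<and> is_run learner (ppcfg_lang (GammaN N)) tgt h
              \<and> learner h = Output p \<longrightarrow>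
                valid_setting (GammaN N) p
                \<and> ppcfg_lang (GammaN N) p = ppcfg_lang (GammaN N) tgt"
  shows "\<exists>tgt h p. valid_setting (GammaN N) tgt
              \<and> is_run learner (ppcfg_lang (GammaN N)) tgt h
              \<and> learner h = Output p
              \<and> length h \<ge> 2 ^ N - 1"
proof -
  interpret singleton_class_learner "valid_setting (GammaN N)" "ppcfg_lang (GammaN N)"
    "selected_word N" learner
    using GammaN_singleton_class_learner[OF eq_queries_wf correct] .
  let ?W = "{w :: bit list. length w = N}"
  have W: "finite ?W" "?W \<noteq> {}"
    using card_gt_0_iff[of ?W] by (simp_all add: card_bit_words)
  have "\<exists>t h p. valid_setting (GammaN N) t \<and> is_run learner (ppcfg_lang (GammaN N)) t h
      \<and> learner h = Output p \<and> length h \<ge> card ?W - 1"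
    by (rule singleton_class_lower_bound[OF bit_words_selected W])
      (use terminates in simp)
  then show ?thesis
    unfolding card_bit_words .
qed

end
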